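(* Let $G$ be a vertex-weighted complex digraph (as defined in the context) and $k\ge 1$ an integer. Then $G$ has exactly $k$ connected components if and only if the algebraic multiplicity of the eigenvalue $0$ of $L(G)$ equals $k$.
   Context: A vertex-weighted complex digraph is $G=(V,E)$ with $V=\{1,\dots,n\}$, $E\subseteq\{(i,j)\in V\times V:i\neq j\}$ such that for $i\neq j$ at most one of $(i,j),(j,i)$ lies in $E$, together with nonzero complex vertex weights $w_1,\dots,w_n\in\mathbb C\setminus\{0\}$; for each $i$ fix a square root $s_i$ with $s_i^2=w_i$. Vertices $i\neq j$ are adjacent iff $(i,j)\in E$ or $(j,i)\in E$. The adjacency matrix $A(G)$ has $A_{ij}=\overline{s_i}\,s_j$ if $i,j$ are adjacent and $A_{ij}=0$ otherwise. The degree of vertex $i$ is $d_i=\sum_{j \text{ adjacent to } i}|w_j|$, $D(G)=\mathrm{diag}(d_1,\dots,d_n)$, the combinatorial Laplacian is $L(G)=D(G)-A(G)$ and the signless Laplacian is $Q(G)=D(G)+A(G)$; both are Hermitian positive semidefinite. Connectivity, connected components and cycles refer to the underlying undirected graph. *)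

theory Defs
  imports "Jordan_Normal_Form.Jordan_Normal_Form" "HOL-Library.Disjoint_Sets"
begin

text \<open>Vertices are indexed 0..<n (instead of 1..n) to match matrix indexing.
  E is a set of directed edges; w the vertex weights; s chosen square roots.\<close>

definition wdigraph :: "nat \<Rightarrow> (nat \<times> nat) set \<Rightarrow> (nat \<Rightarrow> complex) \<Rightarrow> (nat \<Rightarrow> complex) \<Rightarrow> bool" where
  "wdigraph n E w s \<longleftrightarrow>
     E \<subseteq> {(i,j). i < n \<and> j < n \<and> i \<noteq> j} \<and>
     (\<forall>i j. (i,j) \<in> E \<longrightarrow> (j,i) \<notin> E) \<and>
     (\<forall>i<n. w i \<noteq> 0 \<and> (s i)\<^sup>2 = w i)"

definition adjacent :: "(nat \<times> nat) set \<Rightarrow> nat \<Rightarrow> nat \<Rightarrow> bool" where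
  "adjacent E i j \<longleftrightarrow> i \<noteq> j \<and> ((i,j) \<in> E \<or> (j,i) \<in> E)"

definition adj_mat :: "nat \<Rightarrow> (nat \<times> nat) set \<Rightarrow> (nat \<Rightarrow> complex) \<Rightarrow> complex mat" where
  "adj_mat n E s = mat n n (\<lambda>(i,j). if adjacent E i j then cnj (s i) * s j else 0)"

definition degree :: "nat \<Rightarrow> (nat \<times> nat) set \<Rightarrow> (nat \<Rightarrow> complex) \<Rightarrow> nat \<Rightarrow> real" where
  "degree n E w i = (\<Sum>j\<in>{j. j < n \<and> adjacent E i j}. cmod (w j))"

definition deg_mat :: "nat \<Rightarrow> (nat \<times> nat) set \<Rightarrow> (nat \<Rightarrow> complex) \<Rightarrow> complex mat" where
  "deg_mat n E w = mat n n (\<lambda>(i,j). if i = j then complex_of_real (degree n E w i) else 0)"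

definition laplacian :: "nat \<Rightarrow> (nat \<times> nat) set \<Rightarrow> (nat \<Rightarrow> complex) \<Rightarrow> (nat \<Rightarrow> complex) \<Rightarrow> complex mat" where
  "laplacian n E w s = deg_mat n E w - adj_mat n E s"

definition conn_rel :: "nat \<Rightarrow> (nat \<times> nat) set \<Rightarrow> (nat \<times> nat) set" where
  "conn_rel n E = ({(i,j). i < n \<and> j < n \<and> adjacent E i j})\<^sup>* \<inter> ({0..<n} \<times> {0..<n})"

definition num_components :: "nat \<Rightarrow> (nat \<times> nat) set \<Rightarrow> nat" where
  "num_components n E = card ({0..<n} // conn_rel n E)"

definition alg_mult :: "complex mat \<Rightarrow> complex \<Rightarrow> nat" where
  "alg_mult A a = order a (char_poly A)"

end

theory Submission
  imports Defs "Jordan_Normal_Form.Jordan_Normal_Form_Existence"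
    "Jordan_Normal_Form.Jordan_Normal_Form_Uniqueness"
begin

(* The proof has a linear-algebra half and a graph half.
   (1) For a square complex matrix M, if ker (M - a)^2 = ker (M - a) then every Jordan
       block of M for a has size 1, so the algebraic multiplicity of a equals the
       geometric one, dim ker (M - a).  A Hermitian matrix satisfies ker M^2 = ker M,
       since |Mv|^2 = <v, M^2 v>.
   (2) L is Hermitian, and its quadratic form is, with y_k = x_k / conj(s_k),
         2 x^* L x = sum over adjacent ordered pairs (k,l) of |s_k|^2 |s_l|^2 |y_k - y_l|^2.
       Hence x is in ker L iff y is constant on every connected component.  The vectors
       v_C (equal to conj(s_i) on the component C and 0 elsewhere) therefore form a basis
       of ker L, so dim ker L is the number of components. *)

section \<open>Semisimple eigenvalues and Hermitian matrices\<close>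

text \<open>If truncating the Jordan block sizes at 1 or at 2 gives the same total, all block
  sizes are at most 1, so truncation at 1 changes nothing.\<close>
lemma sum_list_min1_eq_if_min2_eq:
  fixes xs :: "nat list"
  assumes "sum_list (map (min 1) xs) = sum_list (map (min 2) xs)"
  shows "sum_list xs = sum_list (map (min 1) xs)"
  using assms
proof (induct xs)
  case (Cons x xs)
  have "sum_list (map (min (1::nat)) xs) \<le> sum_list (map (min 2) xs)"
    by (rule sum_list_mono) auto
  with Cons.prems have "min 1 x = min 2 x"
    and "sum_list (map (min (1::nat)) xs) = sum_list (map (min 2) xs)"
    by auto
  with Cons.hyps show ?case by auto
qed simp

text \<open>The proof reads the Jordan normal
  form through the dimensions of the generalized eigenspaces of order 1 and 2.\<close>
lemma alg_mult_eq_kernel_dim_if_semisimple: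
  fixes M :: "complex mat"
  assumes M: "M \<in> carrier_mat n n"
    and ker: "mat_kernel (char_matrix M a * char_matrix M a) = mat_kernel (char_matrix M a)"
  shows "alg_mult M a = kernel_dim (char_matrix M a)"
proof -
  let ?B = "char_matrix M a"
  have B: "?B \<in> carrier_mat n n" using M by simp
  obtain as where "char_poly M = (\<Prod>a\<leftarrow>as. [:- a, 1:])"
    using char_poly_factorized[OF M] by auto
  from jordan_nf_exists[OF M this] obtain n_as where jnf: "jordan_nf M n_as" ..
  define sizes where "sizes = map fst [(n, e)\<leftarrow>n_as . e = a]"
  have pow1: "?B ^\<^sub>m 1 = ?B" and pow2: "?B ^\<^sub>m 2 = ?B * ?B"
    using B by (simp_all add: numeral_2_eq_2)
  have "kernel_dim (?B * ?B) = kernel_dim ?B"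
    unfolding kernel_dim_def using B ker by simp
  then have "dim_gen_eigenspace M a 1 = kernel_dim ?B" and "dim_gen_eigenspace M a 2 = kernel_dim ?B"
    unfolding dim_gen_eigenspace_def pow1 pow2 by simp_all
  then have gen1: "sum_list (map (min 1) sizes) = kernel_dim ?B"
    and gen2: "sum_list (map (min 2) sizes) = kernel_dim ?B"
    unfolding dim_gen_eigenspace[OF jnf] sizes_def by simp_all
  have "filter (\<lambda>na. snd na = a) n_as = [(n, e)\<leftarrow>n_as . e = a]"
    by (rule filter_cong) auto
  then have "alg_mult M a = sum_list sizes"
    unfolding alg_mult_def jordan_nf_order[OF jnf] sizes_def by (rule arg_cong)
  also have "\<dots> = sum_list (map (min 1) sizes)"
    by (rule sum_list_min1_eq_if_min2_eq) (simp only: gen1 gen2)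
  also have "\<dots> = kernel_dim ?B" by (rule gen1)
  finally show ?thesis .
qed

lemma mult_mat_vec_zero: "A \<in> carrier_mat nr n \<Longrightarrow> A *\<^sub>v 0\<^sub>v n = 0\<^sub>v nr"
  by (intro eq_vecI) (auto simp: mult_mat_vec_def)

text \<open>For a Hermitian matrix M, M^2 v = 0 forces M v = 0: with u = M v one has
  |u|^2 = v^* M^2 v = 0.\<close>
lemma hermitian_mat_kernel_square:
  fixes M :: "complex mat"
  assumes M: "M \<in> carrier_mat n n"
    and herm: "\<And>i j. i < n \<Longrightarrow> j < n \<Longrightarrow> M $$ (j,i) = cnj (M $$ (i,j))"
  shows "mat_kernel (M * M) = mat_kernel M"
proof -
  have cnj_entry: "cnj (M $$ (i,j)) = M $$ (j,i)" if "i < n" "j < n" for i j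
    using herm[OF that] by simp
  have square_kills: "M *\<^sub>v v = 0\<^sub>v n"
    if v: "v \<in> carrier_vec n" and MMv: "(M * M) *\<^sub>v v = 0\<^sub>v n" for v
  proof -
    define u where "u = M *\<^sub>v v"
    have u: "u \<in> carrier_vec n" using M v u_def by auto
    have Mu: "M *\<^sub>v u = 0\<^sub>v n" using MMv M v unfolding u_def by (simp add: assoc_mult_mat_vec)
    have u_index: "u $ i = (\<Sum>j\<in>{0..<n}. M $$ (i,j) * v $ j)" if "i < n" for i
      using M v that unfolding u_def by (auto simp: mult_mat_vec_def scalar_prod_def)
    have Mu_index: "(\<Sum>i\<in>{0..<n}. M $$ (j,i) * u $ i) = 0" if j: "j < n" for j
    proof -
      have "(M *\<^sub>v u) $ j = (\<Sum>i\<in>{0..<n}. M $$ (j,i) * u $ i)"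
        using M u j by (auto simp: mult_mat_vec_def scalar_prod_def)
      then show ?thesis using Mu j by simp
    qed
    have "u \<bullet>c u = (\<Sum>i\<in>{0..<n}. cnj (u $ i) * u $ i)"
      using u by (simp add: scalar_prod_def mult.commute)
    also have "\<dots> = (\<Sum>i\<in>{0..<n}. \<Sum>j\<in>{0..<n}. cnj (M $$ (i,j)) * cnj (v $ j) * u $ i)"
      by (rule sum.cong) (simp_all add: u_index sum_distrib_right)
    also have "\<dots> = (\<Sum>j\<in>{0..<n}. \<Sum>i\<in>{0..<n}. cnj (v $ j) * (M $$ (j,i) * u $ i))"
      by (subst sum.swap, intro sum.cong refl) (simp add: cnj_entry mult_ac)
    also have "\<dots> = (\<Sum>j\<in>{0..<n}. cnj (v $ j) * (\<Sum>i\<in>{0..<n}. M $$ (j,i) * u $ i))"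
      by (simp add: sum_distrib_left)
    also have "\<dots> = 0" by (simp add: Mu_index)
    finally have "u \<bullet>c u = 0" .
    then have "u = 0\<^sub>v n" using conjugate_square_eq_0_vec[OF u] by simp
    then show ?thesis unfolding u_def .
  qed
  have square_of_kernel: "(M * M) *\<^sub>v v = 0\<^sub>v n"
    if v: "v \<in> carrier_vec n" and Mv: "M *\<^sub>v v = 0\<^sub>v n" for v
    using M v Mv by (simp add: assoc_mult_mat_vec mult_mat_vec_zero)
  have MM: "M * M \<in> carrier_mat n n" using M by simp
  show ?thesis
    unfolding mat_kernel_def carrier_matD[OF M] carrier_matD[OF MM]
    using square_kills square_of_kernel by blast
qed

section \<open>The Laplacian matrix\<close>

lemma adjacent_sym: "adjacent E i j = adjacent E j i"
  unfolding adjacent_def by auto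

lemma adjacent_irrefl: "\<not> adjacent E i i"
  unfolding adjacent_def by auto

lemma laplacian_carrier: "laplacian n E w s \<in> carrier_mat n n"
  unfolding laplacian_def deg_mat_def adj_mat_def by auto

lemma laplacian_index:
  "i < n \<Longrightarrow> j < n \<Longrightarrow> laplacian n E w s $$ (i,j) =
     (if i = j then complex_of_real (degree n E w i) else 0)
     - (if adjacent E i j then cnj (s i) * s j else 0)"
  unfolding laplacian_def deg_mat_def adj_mat_def by auto

lemma laplacian_hermitian:
  "i < n \<Longrightarrow> j < n \<Longrightarrow> laplacian n E w s $$ (j,i) = cnj (laplacian n E w s $$ (i,j))"
  by (auto simp: laplacian_index adjacent_sym)

lemma norm_weight: "(s j)\<^sup>2 = w j \<Longrightarrow> complex_of_real (cmod (w j)) = s j * cnj (s j)"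
  by (metis complex_norm_square norm_power)

lemma laplacian_mult_vec_index:
  assumes x: "x \<in> carrier_vec n" and i: "i < n"
  shows "(laplacian n E w s *\<^sub>v x) $ i =
    (\<Sum>j\<in>{j. j < n \<and> adjacent E i j}. complex_of_real (cmod (w j)) * x $ i - cnj (s i) * s j * x $ j)"
proof -
  let ?N = "{j. j < n \<and> adjacent E i j}"
  have "(laplacian n E w s *\<^sub>v x) $ i = (\<Sum>j<n. laplacian n E w s $$ (i,j) * x $ j)"
    using x i laplacian_carrier[of n E w s]
    by (auto simp: mult_mat_vec_def scalar_prod_def atLeast0LessThan)
  also have "\<dots> = (\<Sum>j<n. if i = j then complex_of_real (degree n E w i) * x $ j else 0)
     - (\<Sum>j<n. if adjacent E i j then cnj (s i) * s j * x $ j else 0)"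
    unfolding sum_subtractf[symmetric] by (rule sum.cong) (auto simp: laplacian_index i adjacent_irrefl)
  also have "\<dots> = complex_of_real (degree n E w i) * x $ i - (\<Sum>j\<in>?N. cnj (s i) * s j * x $ j)"
    using i by (simp add: sum.inter_filter[symmetric] lessThan_def)
  also have "complex_of_real (degree n E w i) * x $ i = (\<Sum>j\<in>?N. complex_of_real (cmod (w j)) * x $ i)"
    unfolding degree_def by (simp add: sum_distrib_right)
  finally show ?thesis by (simp add: sum_subtractf)
qed

section \<open>Connected components\<close>

definition adjacent_pairs :: "nat \<Rightarrow> (nat \<times> nat) set \<Rightarrow> (nat \<times> nat) set" where
  "adjacent_pairs n E = {(i,j). i < n \<and> j < n \<and> adjacent E i j}"

lemma finite_adjacent_pairs: "finite (adjacent_pairs n E)"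
  unfolding adjacent_pairs_def by (rule finite_subset[of _ "{..<n} \<times> {..<n}"]) auto

lemma conn_rel_adjacent_pairs: "conn_rel n E = (adjacent_pairs n E)\<^sup>* \<inter> ({0..<n} \<times> {0..<n})"
  unfolding conn_rel_def adjacent_pairs_def ..

lemma conn_rel_equiv: "equiv {0..<n} (conn_rel n E)"
proof -
  have "sym (adjacent_pairs n E)" unfolding sym_def adjacent_pairs_def using adjacent_sym by blast
  then show ?thesis unfolding equiv_def conn_rel_adjacent_pairs
    by (intro conjI sym_Int sym_rtrancl trans_Int trans_rtrancl)
       (auto simp: refl_on_def sym_def trans_def)
qed

lemma adjacent_conn_rel: "i < n \<Longrightarrow> j < n \<Longrightarrow> adjacent E i j \<Longrightarrow> (i,j) \<in> conn_rel n E"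
  unfolding conn_rel_def by auto

lemma conn_rel_constant:
  assumes "(i,j) \<in> conn_rel n E"
    and edge: "\<And>a b. a < n \<Longrightarrow> b < n \<Longrightarrow> adjacent E a b \<Longrightarrow> f a = f b"
  shows "f i = f j"
proof -
  from assms(1) have "(i,j) \<in> (adjacent_pairs n E)\<^sup>*"
    unfolding conn_rel_adjacent_pairs by auto
  then show ?thesis
    by (induct rule: rtrancl_induct) (auto simp: adjacent_pairs_def dest: edge)
qed

section \<open>The kernel of the Laplacian\<close>

context
  fixes n :: nat and E :: "(nat \<times> nat) set" and w s :: "nat \<Rightarrow> complex"
  assumes G: "wdigraph n E w s"
begin

lemma root_square: "k < n \<Longrightarrow> (s k)\<^sup>2 = w k"
  using G unfolding wdigraph_def by auto

lemma root_nonzero: "k < n \<Longrightarrow> s k \<noteq> 0"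
  using G unfolding wdigraph_def by (metis power2_eq_square mult_zero_left)

text \<open>Each unordered edge
  contributes two terms f(k,l) + f(l,k), which combine to a square.\<close>
lemma laplacian_quadratic_form:
  assumes x: "x \<in> carrier_vec n"
  defines "y \<equiv> \<lambda>k. x $ k / cnj (s k)"
  shows "2 * (\<Sum>k<n. cnj (x $ k) * (laplacian n E w s *\<^sub>v x) $ k) =
    complex_of_real (\<Sum>(k,l)\<in>adjacent_pairs n E.
      (cmod (s k))\<^sup>2 * (cmod (s l))\<^sup>2 * (cmod (y k - y l))\<^sup>2)"
proof -
  define P where "P = adjacent_pairs n E"
  define a where "a k = s k * cnj (s k)" for k
  define f where "f = (\<lambda>(k,l). a k * a l * (cnj (y k) * (y k - y l)))"
  have xy: "x $ k = cnj (s k) * y k" if "k < n" for k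
    using root_nonzero[OF that] unfolding y_def by simp
  have edge_term: "cnj (x $ k) * (complex_of_real (cmod (w l)) * x $ k - cnj (s k) * s l * x $ l) = f (k,l)"
    if "k < n" "l < n" for k l
    using that by (simp add: f_def a_def xy norm_weight root_square algebra_simps)
  have "(\<Sum>k<n. cnj (x $ k) * (laplacian n E w s *\<^sub>v x) $ k)
      = (\<Sum>k<n. \<Sum>l\<in>{l. l < n \<and> adjacent E k l}. f (k,l))"
    by (rule sum.cong) (simp_all add: laplacian_mult_vec_index[OF x] sum_distrib_left edge_term)
  also have "\<dots> = sum f P"
    unfolding P_def adjacent_pairs_def by (subst sum.Sigma) (auto intro: sum.cong)
  finally have form: "(\<Sum>k<n. cnj (x $ k) * (laplacian n E w s *\<^sub>v x) $ k) = sum f P" .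
  have swap: "(\<Sum>p\<in>P. f (prod.swap p)) = sum f P"
    by (rule sum.reindex_bij_witness[of _ prod.swap prod.swap]) (auto simp: P_def adjacent_pairs_def adjacent_sym)
  define g where "g = (\<lambda>(k,l). (cmod (s k))\<^sup>2 * (cmod (s l))\<^sup>2 * (cmod (y k - y l))\<^sup>2)"
  have pair: "complex_of_real (g p) = f p + f (prod.swap p)" for p
  proof -
    obtain k l where p: "p = (k,l)" by force
    have "complex_of_real (g p) = a k * a l * ((y k - y l) * cnj (y k - y l))"
      unfolding g_def p case_prod_conv a_def of_real_mult complex_norm_square
      by (simp only: mult_ac)
    also have "\<dots> = f p + f (prod.swap p)" unfolding f_def p by (simp add: algebra_simps)
    finally show ?thesis .
  qed
  have "2 * sum f P = sum f P + (\<Sum>p\<in>P. f (prod.swap p))" by (simp add: swap)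
  also have "\<dots> = complex_of_real (sum g P)" by (simp add: pair of_real_sum sum.distrib)
  finally show ?thesis unfolding form P_def[symmetric] g_def .
qed

lemma kernel_constant_on_edges:
  assumes x: "x \<in> mat_kernel (laplacian n E w s)"
    and i: "i < n" and j: "j < n" and adj: "adjacent E i j"
  shows "x $ i / cnj (s i) = x $ j / cnj (s j)"
proof -
  define y where "y k = x $ k / cnj (s k)" for k
  define P where "P = adjacent_pairs n E"
  define g where "g = (\<lambda>(k,l). (cmod (s k))\<^sup>2 * (cmod (s l))\<^sup>2 * (cmod (y k - y l))\<^sup>2)"
  have xc: "x \<in> carrier_vec n" and Lx: "laplacian n E w s *\<^sub>v x = 0\<^sub>v n"
    using mat_kernelD[OF laplacian_carrier x] by auto
  have "complex_of_real (sum g P) = 2 * (\<Sum>k<n. cnj (x $ k) * (laplacian n E w s *\<^sub>v x) $ k)"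
    unfolding g_def P_def y_def by (rule laplacian_quadratic_form[OF xc, symmetric])
  also have "\<dots> = 0" using Lx by simp
  finally have "sum g P = 0" by (metis of_real_eq_0_iff)
  moreover have "finite P" unfolding P_def by (rule finite_adjacent_pairs)
  ultimately have "\<forall>p\<in>P. g p = 0"
    by (subst sum_nonneg_eq_0_iff[symmetric]) (auto simp: g_def)
  moreover have "(i,j) \<in> P" unfolding P_def adjacent_pairs_def using i j adj by auto
  ultimately have "g (i,j) = 0" by blast
  then have "y i = y j" using root_nonzero[OF i] root_nonzero[OF j] unfolding g_def by simp
  then show ?thesis unfolding y_def .
qed

lemma kernel_constant_on_components:
  assumes "x \<in> mat_kernel (laplacian n E w s)" and "(i,j) \<in> conn_rel n E"
  shows "x $ i / cnj (s i) = x $ j / cnj (s j)"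
  by (rule conn_rel_constant[OF assms(2), of "\<lambda>k. x $ k / cnj (s k)"])
     (rule kernel_constant_on_edges[OF assms(1)])

definition component_vec :: "nat set \<Rightarrow> complex vec" where
  "component_vec C = vec n (\<lambda>i. if i \<in> C then cnj (s i) else 0)"

lemma component_vec_carrier: "component_vec C \<in> carrier_vec n"
  unfolding component_vec_def by auto

lemma component_vec_index: "i < n \<Longrightarrow> component_vec C $ i = (if i \<in> C then cnj (s i) else 0)"
  unfolding component_vec_def by auto

abbreviation components :: "nat set set" where
  "components \<equiv> {0..<n} // conn_rel n E"

lemma finite_components: "finite components"
  by (rule finite_quotient) (auto simp: conn_rel_def)

lemma component_of:
  assumes i: "i < n"
  shows "conn_rel n E `` {i} \<in> components" and "i \<in> conn_rel n E `` {i}"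
    and "\<And>C. C \<in> components \<Longrightarrow> i \<in> C \<Longrightarrow> C = conn_rel n E `` {i}"
proof -
  show "conn_rel n E `` {i} \<in> components" using i by (intro quotientI) simp
  show "i \<in> conn_rel n E `` {i}" using i by (intro equiv_class_self[OF conn_rel_equiv]) simp
  fix C assume C: "C \<in> components" and iC: "i \<in> C"
  then obtain x where "C = conn_rel n E `` {x}" by (auto elim: quotientE)
  with iC show "C = conn_rel n E `` {i}" using equiv_class_eq[OF conn_rel_equiv] by blast
qed

text \<open>v_C lies in ker L: each row sum vanishes because neighbours lie in the same
  component, and |w_j| conj(s_i) = conj(s_i) s_j conj(s_j).\<close>
lemma component_vec_in_kernel:
  assumes C: "C \<in> components"
  shows "component_vec C \<in> mat_kernel (laplacian n E w s)"
proof (rule mat_kernelI[OF laplacian_carrier component_vec_carrier], rule eq_vecI)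
  fix i assume "i < dim_vec (0\<^sub>v n :: complex vec)"
  then have i: "i < n" by simp
  have "(laplacian n E w s *\<^sub>v component_vec C) $ i = 0"
    unfolding laplacian_mult_vec_index[OF component_vec_carrier i]
  proof (rule sum.neutral, intro ballI)
    fix j assume "j \<in> {j. j < n \<and> adjacent E i j}"
    then have j: "j < n" and adj: "adjacent E i j" by auto
    have "(i,j) \<in> conn_rel n E" "(j,i) \<in> conn_rel n E"
      using adjacent_conn_rel[OF i j adj] adjacent_conn_rel[OF j i] adj adjacent_sym by auto
    then have "i \<in> C \<longleftrightarrow> j \<in> C"
      using in_quotient_imp_closed[OF conn_rel_equiv C] by blast
    then show "complex_of_real (cmod (w j)) * component_vec C $ i
        - cnj (s i) * s j * component_vec C $ j = 0"
      using i j by (simp add: component_vec_index norm_weight[of s j w, OF root_square[OF j]] algebra_simps)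
  qed
  then show "(laplacian n E w s *\<^sub>v component_vec C) $ i = 0\<^sub>v n $ i" using i by simp
qed (simp add: laplacian_carrier[THEN carrier_matD(1)])

text \<open>Distinct components give distinct vectors, since the s_i are nonzero.\<close>
lemma component_vec_inj: "inj_on component_vec components"
proof (rule inj_onI)
  fix C D assume C: "C \<in> components" and D: "D \<in> components"
    and eq: "component_vec C = component_vec D"
  obtain i where iC: "i \<in> C"
    using in_quotient_imp_non_empty[OF conn_rel_equiv C] by blast
  have i: "i < n" using in_quotient_imp_subset[OF conn_rel_equiv C] iC by auto
  have "component_vec D $ i \<noteq> 0"
    unfolding eq[symmetric] using iC i root_nonzero[OF i] by (simp add: component_vec_index)
  then have "i \<in> D" using i by (simp add: component_vec_index split: if_splits)
  then show "C = D" using component_of(3)[OF i] C D iC by metis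
qed

interpretation K: kernel n n "laplacian n E w s"
  by unfold_locales (rule laplacian_carrier)

lemma lincomb_component_vecs_index:
  assumes i: "i < n"
  shows "K.lincomb c (component_vec ` components) $ i
    = c (component_vec (conn_rel n E `` {i})) * cnj (s i)"
proof -
  let ?Ci = "conn_rel n E `` {i}"
  have sub: "component_vec ` components \<subseteq> mat_kernel (laplacian n E w s)"
    using component_vec_in_kernel by auto
  have "K.lincomb c (component_vec ` components) $ i
      = (\<Sum>C\<in>components. c (component_vec C) * component_vec C $ i)"
    by (simp add: K.lincomb_index[OF i sub] sum.reindex[OF component_vec_inj])
  also have "\<dots> = c (component_vec ?Ci) * component_vec ?Ci $ i
      + (\<Sum>C\<in>components - {?Ci}. c (component_vec C) * component_vec C $ i)"
    by (rule sum.remove[OF finite_components component_of(1)[OF i]])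
  also have "(\<Sum>C\<in>components - {?Ci}. c (component_vec C) * component_vec C $ i) = 0"
    using component_of(3)[OF i] by (intro sum.neutral) (auto simp: component_vec_index i)
  finally show ?thesis using component_of(2)[OF i] i by (simp add: component_vec_index)
qed

text \<open>The vectors v_C form a basis of ker L: they are independent because their supports
  are disjoint, and they span because a kernel vector x equals the combination of the v_C
  with coefficient x_i / conj(s_i) for any vertex i of C.\<close>
lemma component_vecs_basis: "K.basis (component_vec ` components)"
proof -
  let ?B = "component_vec ` components"
  have sub: "?B \<subseteq> mat_kernel (laplacian n E w s)" using component_vec_in_kernel by auto
  have indep: "K.lin_indpt ?B"
  proof (rule K.Ker.finite_lin_indpt2[OF _ sub])
    fix c assume zero: "K.lincomb c ?B = 0\<^sub>v n"
    show "\<forall>v\<in>?B. c v = 0"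
    proof
      fix v assume "v \<in> ?B"
      then obtain C where C: "C \<in> components" and v: "v = component_vec C" by auto
      obtain i where iC: "i \<in> C"
        using in_quotient_imp_non_empty[OF conn_rel_equiv C] by blast
      have i: "i < n" using in_quotient_imp_subset[OF conn_rel_equiv C] iC by auto
      have "c (component_vec (conn_rel n E `` {i})) * cnj (s i) = 0"
        using arg_cong[OF zero, of "\<lambda>x. x $ i"] lincomb_component_vecs_index[OF i] i by simp
      then show "c v = 0"
        using component_of(3)[OF i C iC] v root_nonzero[OF i] by simp
    qed
  qed (simp add: finite_components)
  have spans: "mat_kernel (laplacian n E w s) \<subseteq> K.span ?B"
  proof
    fix x assume x: "x \<in> mat_kernel (laplacian n E w s)"
    define y where "y k = x $ k / cnj (s k)" for k
    \<comment> \<open>the coefficient of v_C is the common value of y on C, read off at a vertex of C\<close>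
    define c where "c v = y (SOME i. i < n \<and> v $ i \<noteq> 0)" for v :: "complex vec"
    have x_carrier: "x \<in> carrier_vec n" using mat_kernelD(1)[OF laplacian_carrier x] .
    have lc_carrier: "K.lincomb c ?B \<in> carrier_vec n"
      using mat_kernelD(1)[OF laplacian_carrier K.Ker.lincomb_closed[OF sub]] by simp
    have "x = K.lincomb c ?B"
    proof (rule eq_vecI)
      show "dim_vec x = dim_vec (K.lincomb c ?B)" using x_carrier lc_carrier by simp
      fix i assume "i < dim_vec (K.lincomb c ?B)"
      then have i: "i < n" using lc_carrier by simp
      let ?Ci = "conn_rel n E `` {i}"
      have ex: "\<exists>j. j < n \<and> component_vec ?Ci $ j \<noteq> 0"
        using i component_of(2)[OF i] root_nonzero[OF i] by (auto simp: component_vec_index)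
      define j where "j = (SOME j. j < n \<and> component_vec ?Ci $ j \<noteq> 0)"
      have j: "j < n" "component_vec ?Ci $ j \<noteq> 0" using someI_ex[OF ex] unfolding j_def by blast+
      then have "(i,j) \<in> conn_rel n E" by (simp add: component_vec_index split: if_splits)
      from kernel_constant_on_components[OF x this]
      have "c (component_vec ?Ci) = x $ i / cnj (s i)" unfolding c_def y_def j_def[symmetric] by simp
      then show "x $ i = K.lincomb c ?B $ i"
        using lincomb_component_vecs_index[OF i] root_nonzero[OF i] by simp
    qed
    moreover have "finite ?B" using finite_components by simp
    ultimately show "x \<in> K.span ?B" unfolding K.Ker.span_def by auto
  qed
  show ?thesis
    unfolding K.Ker.basis_def using indep spans K.Ker.span_is_subset2[OF sub] sub by auto
qed

lemma kernel_dim_laplacian: "kernel_dim (laplacian n E w s) = num_components n E"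
proof -
  have "kernel_dim (laplacian n E w s) = card (component_vec ` components)"
    using K.Ker.dim_basis[OF _ component_vecs_basis] finite_components by simp
  also have "\<dots> = num_components n E"
    unfolding num_components_def by (rule card_image[OF component_vec_inj])
  finally show ?thesis .
qed

end

theorem corollary2p7:
  fixes n k :: nat and E :: "(nat \<times> nat) set" and w s :: "nat \<Rightarrow> complex"
  assumes "wdigraph n E w s" and "k \<ge> 1"
  shows "num_components n E = k \<longleftrightarrow> alg_mult (laplacian n E w s) 0 = k"
proof -
  let ?L = "laplacian n E w s"
  have char0: "char_matrix ?L 0 = ?L"
    using laplacian_carrier[of n E w s] by (auto simp: char_matrix_def)
  have "alg_mult ?L 0 = kernel_dim ?L"
    using alg_mult_eq_kernel_dim_if_semisimple[OF laplacian_carrier, of n E w s 0]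
      hermitian_mat_kernel_square[OF laplacian_carrier laplacian_hermitian]
    unfolding char0 by blast
  also have "\<dots> = num_components n E" by (rule kernel_dim_laplacian[OF assms(1)])
  finally show ?thesis by simp
qed

end
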